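(* Let $(X,+)$ be an abelian group, $(g,\gamma)$ a construction pair on $(X,+)$, and $C=\langle b\rangle$ a cyclic group. The following are equivalent: (i) The formula $$(b^i,x)\cdot(b^j,y)=\Big(b^{i+j},\ g^{-j}(x)+y+\sum_{k\in I(i+j,-j)}g^{-k}(\gamma(x,y))\Big)\qquad(i,j\in\mathbb Z,\ x,y\in X)$$ correctly defines a multiplication on $C\times X$ (i.e., the right-hand side depends only on the elements $b^i,b^j\in C$ and not on the chosen exponents $i,j$). (ii) Either $C$ is infinite, or $C$ is finite, the order $|g|$ of $g$ (as a permutation) divides $|C|$, and $\sum_{0\le k<|C|}g^k(x)\in\mathrm{Rad}(\gamma)$ for every $x\in X$. (iii) Either $C$ is infinite, or $C$ is finite, $|g|$ divides $|C|$, and $r(g,\gamma)$ divides $|C|$.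
   Context: Let $(X,+)$ be an abelian group. A map $\gamma:X\times X\to X$ is symmetric if $\gamma(x,y)=\gamma(y,x)$, alternating if $\gamma(x,x)=0$, biadditive if additive in each argument. Its radical is $\mathrm{Rad}(\gamma)=\{x\in X:\gamma(x,y)=0\text{ for all }y\in X\}$. A construction pair on $(X,+)$ is a pair $(g,\gamma)$ where $g$ is a permutation of $X$ and $\gamma:X\times X\to X$ is symmetric, alternating and biadditive, such that for all $x,y,z\in X$: (C1) $g^{-1}(g(x)+g(y))=x+y+\gamma(x,y)+g^{-1}(\gamma(x,y))+g^{-2}(\gamma(x,y))$; (C2) $\gamma(\gamma(x,y),z)=0$; (C3) $g^{-1}(\gamma(x,y))=\gamma(g(x),y)$. For integers $i,j$ the interval $I(i,j)\subseteq\mathbb Z$ is $\emptyset$ if $i=j$, $\{i,i+1,\dots,j-1\}$ if $i<j$, and $\{j,j+1,\dots,i-1\}$ if $j<i$. For a construction pair $(g,\gamma)$, $r(g,\gamma)$ is the least positive integer $r$ such that $\sum_{0\le k<r}g^k(x)\in\mathrm{Rad}(\gamma)$ for every $x\in X$, and $r(g,\gamma)=\infty$ if no such $r$ exists. *)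

theory Defs
  imports "HOL-Algebra.Group"
begin

definition gpow :: "('a \<Rightarrow> 'a) \<Rightarrow> int \<Rightarrow> 'a \<Rightarrow> 'a" where
  "gpow g k = (if 0 \<le> k then g ^^ nat k else (inv_into UNIV g) ^^ nat (- k))"

definition symmetric_map :: "('a \<Rightarrow> 'a \<Rightarrow> 'a) \<Rightarrow> bool" where
  "symmetric_map \<gamma> \<longleftrightarrow> (\<forall>x y. \<gamma> x y = \<gamma> y x)"

definition alternating_map :: "('a::zero \<Rightarrow> 'a \<Rightarrow> 'a) \<Rightarrow> bool" where
  "alternating_map \<gamma> \<longleftrightarrow> (\<forall>x. \<gamma> x x = 0)"

definition biadditive :: "('a::plus \<Rightarrow> 'a \<Rightarrow> 'a) \<Rightarrow> bool" where
  "biadditive \<gamma> \<longleftrightarrow> (\<forall>x y z. \<gamma> (x + y) z = \<gamma> x z + \<gamma> y z) \<and>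
                       (\<forall>x y z. \<gamma> x (y + z) = \<gamma> x y + \<gamma> x z)"

definition Rad :: "('a::zero \<Rightarrow> 'a \<Rightarrow> 'a) \<Rightarrow> 'a set" where
  "Rad \<gamma> = {x. \<forall>y. \<gamma> x y = 0}"

definition construction_pair :: "('a::ab_group_add \<Rightarrow> 'a) \<Rightarrow> ('a \<Rightarrow> 'a \<Rightarrow> 'a) \<Rightarrow> bool" where
  "construction_pair g \<gamma> \<longleftrightarrow> bij g \<and> symmetric_map \<gamma> \<and> alternating_map \<gamma> \<and> biadditive \<gamma> \<and>
     (\<forall>x y. inv_into UNIV g (g x + g y) = x + y + \<gamma> x y + gpow g (-1) (\<gamma> x y) + gpow g (-2) (\<gamma> x y)) \<and>
     (\<forall>x y z. \<gamma> (\<gamma> x y) z = 0) \<and>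
     (\<forall>x y. inv_into UNIV g (\<gamma> x y) = \<gamma> (g x) y)"

definition Ival :: "int \<Rightarrow> int \<Rightarrow> int set" where
  "Ival i j = (if i \<le> j then {i..<j} else {j..<i})"

text \<open>Order of a permutation; 0 encodes infinite order.\<close>
definition perm_ord :: "('a \<Rightarrow> 'a) \<Rightarrow> nat" where
  "perm_ord g = (if \<exists>n>0. g ^^ n = id then (LEAST n. 0 < n \<and> g ^^ n = id) else 0)"

text \<open>r(g,gamma); 0 encodes infinity.\<close>
definition r_cp :: "('a::ab_group_add \<Rightarrow> 'a) \<Rightarrow> ('a \<Rightarrow> 'a \<Rightarrow> 'a) \<Rightarrow> nat" where
  "r_cp g \<gamma> = (if \<exists>r>0. \<forall>x. (\<Sum>k<r. (g ^^ k) x) \<in> Rad \<gamma>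
                then (LEAST r. 0 < r \<and> (\<forall>x. (\<Sum>k<r. (g ^^ k) x) \<in> Rad \<gamma>)) else 0)"

definition mult_snd :: "('a::ab_group_add \<Rightarrow> 'a) \<Rightarrow> ('a \<Rightarrow> 'a \<Rightarrow> 'a) \<Rightarrow> int \<Rightarrow> int \<Rightarrow> 'a \<Rightarrow> 'a \<Rightarrow> 'a" where
  "mult_snd g \<gamma> i j x y = gpow g (- j) x + y + (\<Sum>k\<in>Ival (i + j) (- j). gpow g (- k) (\<gamma> x y))"

end

theory Submission
  imports Defs "HOL-Algebra.Multiplicative_Group"
begin

text \<open>
  By (C3) the correction term is \<open>\<Sum>k\<in>I(i+j,-j). u k\<close> with \<open>u k = \<gamma>(g\<^sup>k x, y)\<close>. As \<open>\<gamma>\<close> is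
  symmetric and alternating, all its values have order at most 2, so a sum over \<open>I(a,b)\<close> equals
  \<open>F a + F b\<close> with \<open>F a = \<Sum>k\<in>I(0,a). u k\<close>. The product therefore depends on the exponents only
  through \<open>g\<^sup>-\<^sup>j x\<close>, \<open>F(i+j)\<close> and \<open>F(-j)\<close>, and it is well defined modulo \<open>n = |C|\<close> iff \<open>g\<^sup>n = id\<close>
  and \<open>F\<close> is \<open>n\<close>-periodic, i.e. \<open>\<gamma>(\<Sum>k<n. g\<^sup>k x', y) = 0\<close> for all \<open>x'\<close>. Both conditions on \<open>n\<close> are
  closed under sums and differences, hence hold exactly for the multiples of the least positive
  \<open>n\<close> satisfying them, which are \<open>|g|\<close> and \<open>r(g,\<gamma>)\<close>.
\<close>

subsection \<open>Minimal periods\<close>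

lemma dvd_Least_iff_closed_add_diff:
  fixes P :: "nat \<Rightarrow> bool"
  assumes add: "\<And>m m'. P m \<Longrightarrow> P m' \<Longrightarrow> P (m + m')"
    and diff: "\<And>m m'. P m \<Longrightarrow> P m' \<Longrightarrow> m' \<le> m \<Longrightarrow> P (m - m')"
    and n: "0 < n"
  shows "(if \<exists>r>0. P r then LEAST r. 0 < r \<and> P r else 0) dvd n \<longleftrightarrow> P n"
proof (cases "\<exists>r>0. P r")
  case False
  then have "\<not> P n" using n by blast
  then show ?thesis
    by (subst if_not_P[OF False]) (use n in auto)
next
  case True
  define r where "r = (LEAST r. 0 < r \<and> P r)"
  have r: "0 < r" "P r"
    using LeastI_ex[of "\<lambda>r. 0 < r \<and> P r"] True by (auto simp: r_def)
  have multiple: "P (q * r)" for q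
    by (induction q) (use r diff[of r r] add in auto)
  have "r dvd n" if "P n"
  proof -
    have "P (n - n div r * r)"
      using diff[OF that multiple] by simp
    then have "P (n mod r)"
      by (simp add: minus_div_mult_eq_mod)
    then have "\<not> 0 < n mod r"
      using not_less_Least[of "n mod r" "\<lambda>r. 0 < r \<and> P r"] r by (auto simp: r_def)
    then show ?thesis
      by (simp add: dvd_eq_mod_eq_0)
  qed
  then show ?thesis
    using True multiple by (auto simp: r_def[symmetric] mult.commute elim!: dvdE)
qed

lemma funpow_eq_id_add: "f ^^ m = id \<Longrightarrow> f ^^ m' = id \<Longrightarrow> f ^^ (m + m') = id"
  by (simp add: funpow_add)

lemma funpow_eq_id_diff:
  assumes "f ^^ m = id" "f ^^ m' = id" "m' \<le> m"
  shows "f ^^ (m - m') = id"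
  using funpow_add[of "m - m'" m' f] assms by simp

lemma perm_ord_dvd_iff: "0 < n \<Longrightarrow> perm_ord g dvd n \<longleftrightarrow> g ^^ n = id"
  unfolding perm_ord_def
  by (rule dvd_Least_iff_closed_add_diff) (auto intro: funpow_eq_id_add funpow_eq_id_diff)

lemma sum_funpow_add:
  "(\<Sum>k<m + m'. (g ^^ k) x) = (\<Sum>k<m. (g ^^ k) x) + (\<Sum>k<m'. (g ^^ k) ((g ^^ m) x))"
proof (induction m')
  case (Suc m')
  have "(g ^^ (m + m')) x = (g ^^ m') ((g ^^ m) x)"
    by (metis funpow_add comp_apply add.commute)
  then show ?case
    using Suc by (simp add: add.assoc)
qed simp

subsection \<open>Integer powers of a bijection\<close>

lemma gpow_0 [simp]: "gpow g 0 = id"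
  by (simp add: gpow_def)

lemma gpow_of_nat [simp]: "gpow g (int n) = g ^^ n"
  by (simp add: gpow_def)

lemma gpow_add_one:
  assumes "bij g"
  shows "gpow g (k + 1) x = g (gpow g k x)"
proof (cases "0 \<le> k")
  case True
  then have "nat (k + 1) = Suc (nat k)" by simp
  with True show ?thesis by (simp add: gpow_def)
next
  case False
  then have "nat (- k) = Suc (nat (- (k + 1)))" by simp
  with False assms show ?thesis
    by (auto simp: gpow_def bij_is_surj surj_f_inv_f)
qed

lemma gpow_diff_one:
  assumes "bij g"
  shows "gpow g (k - 1) x = inv_into UNIV g (gpow g k x)"
  using gpow_add_one[OF assms, of "k - 1" x] assms by (simp add: bij_is_inj)

lemma gpow_add:
  assumes "bij g"
  shows "gpow g (k + l) x = gpow g k (gpow g l x)"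
proof (induction k rule: int_induct[where k = 0])
  case (step1 i)
  then show ?case
    using gpow_add_one[OF assms, of "i + l"] gpow_add_one[OF assms, of i]
    by (simp add: algebra_simps)
next
  case (step2 i)
  then show ?case
    using gpow_diff_one[OF assms, of "i + l"] gpow_diff_one[OF assms, of i]
    by (simp add: algebra_simps)
qed simp

lemma gpow_add_period:
  assumes "bij g" "g ^^ n = id"
  shows "gpow g (k + int n) x = gpow g k x"
  using gpow_add[OF assms(1), of k "int n" x] assms(2) by simp

lemma periodic_eq_if_dvd:
  fixes f :: "int \<Rightarrow> 'b"
  assumes periodic: "\<And>a. f (a + p) = f a" and "p dvd b - a"
  shows "f b = f a"
proof -
  obtain t where "b - a = p * t"
    using \<open>p dvd b - a\<close> by (rule dvdE)
  then have b: "b = a + t * p" by (simp add: algebra_simps)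
  have "f (a + t * p) = f a"
  proof (induction t rule: int_induct[where k = 0])
    case (step1 i)
    then show ?case
      using periodic[of "a + i * p"] by (simp add: algebra_simps)
  next
    case (step2 i)
    then show ?case
      using periodic[of "a + (i - 1) * p"] by (simp add: algebra_simps)
  qed simp
  with b show ?thesis by simp
qed

subsection \<open>Sums over the intervals \<open>I(a,b)\<close>\<close>

lemma Ival_commute: "Ival a b = Ival b a"
  by (auto simp: Ival_def)

lemma Ival_self [simp]: "Ival a a = {}"
  by (simp add: Ival_def)

lemma sum_Ival_split:
  assumes "a \<le> b" "b \<le> c"
  shows "sum u (Ival a c) = sum u (Ival a b) + sum u (Ival b c)"
proof -
  have "{a..<c} = {a..<b} \<union> {b..<c}" using assms by auto
  then show ?thesis
    using assms by (simp add: Ival_def sum.union_disjoint)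
qed

lemma sum_Ival_two_torsion:
  fixes u :: "int \<Rightarrow> 'a::ab_group_add"
  assumes two_torsion: "\<And>k. u k + u k = 0"
  shows "sum u (Ival a b) = sum u (Ival 0 a) + sum u (Ival 0 b)"
proof -
  define F where "F c = sum u (Ival 0 c)" for c
  have F_two_torsion: "F c + F c = 0" for c
    using two_torsion by (simp add: F_def flip: sum.distrib)
  have ordered: "sum u (Ival a b) = F a + F b" if "a \<le> b" for a b
  proof -
    consider "0 \<le> a" | "a \<le> 0" "0 \<le> b" | "b \<le> 0" using \<open>a \<le> b\<close> by linarith
    then show ?thesis
    proof cases
      case 1
      then have "F b = F a + sum u (Ival a b)"
        using sum_Ival_split[of 0 a b u] \<open>a \<le> b\<close> by (simp add: F_def)
      then show ?thesis
        using F_two_torsion[of a] by (simp add: algebra_simps)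
    next
      case 2
      then show ?thesis
        using sum_Ival_split[of a 0 b u] by (simp add: F_def Ival_commute)
    next
      case 3
      then have "F a = sum u (Ival a b) + F b"
        using sum_Ival_split[of a b 0 u] \<open>a \<le> b\<close> by (simp add: F_def Ival_commute)
      then show ?thesis
        using F_two_torsion[of b] by (simp add: algebra_simps)
    qed
  qed
  show ?thesis
    using ordered[of a b] ordered[of b a] by (cases "a \<le> b") (auto simp: F_def Ival_commute)
qed

subsection \<open>Equivariant forms\<close>

locale equivariant_form =
  fixes g :: "'a::ab_group_add \<Rightarrow> 'a" and \<gamma> :: "'a \<Rightarrow> 'a \<Rightarrow> 'a"
  assumes bij_g: "bij g"
    and symmetric: "symmetric_map \<gamma>"
    and alternating: "alternating_map \<gamma>"
    and biadditive: "biadditive \<gamma>"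
    and inv_gamma: "inv_into UNIV g (\<gamma> x y) = \<gamma> (g x) y"

lemma construction_pair_equivariant_form:
  "construction_pair g \<gamma> \<Longrightarrow> equivariant_form g \<gamma>"
  by (simp add: construction_pair_def equivariant_form_def)

context equivariant_form
begin

lemma gamma_add_left: "\<gamma> (a + b) y = \<gamma> a y + \<gamma> b y"
  using biadditive by (simp add: biadditive_def)

lemma gamma_add_right: "\<gamma> y (a + b) = \<gamma> y a + \<gamma> y b"
  using biadditive by (simp add: biadditive_def)

lemma gamma_zero_left [simp]: "\<gamma> 0 y = 0"
  using gamma_add_left[of 0 0 y] by simp

lemma gamma_zero_right [simp]: "\<gamma> y 0 = 0"
  using gamma_add_right[of y 0 0] by simp

lemma gamma_diff_left: "\<gamma> (a - b) y = \<gamma> a y - \<gamma> b y"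
  using gamma_add_left[of "a - b" b y] by (simp add: algebra_simps)

lemma gamma_two_torsion: "\<gamma> a b + \<gamma> a b = 0"
proof -
  have "\<gamma> (a + b) (a + b) = \<gamma> a a + \<gamma> a b + (\<gamma> b a + \<gamma> b b)"
    by (simp only: gamma_add_left gamma_add_right ac_simps)
  then show ?thesis
    using alternating symmetric by (simp add: alternating_map_def symmetric_map_def)
qed

lemma Rad_add: "a \<in> Rad \<gamma> \<Longrightarrow> b \<in> Rad \<gamma> \<Longrightarrow> a + b \<in> Rad \<gamma>"
  by (simp add: Rad_def gamma_add_left)

lemma Rad_diff: "a \<in> Rad \<gamma> \<Longrightarrow> b \<in> Rad \<gamma> \<Longrightarrow> a - b \<in> Rad \<gamma>"
  by (simp add: Rad_def gamma_diff_left)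

lemma gamma_inv_left: "g (\<gamma> x y) = \<gamma> (inv_into UNIV g x) y"
  using inv_gamma[of "inv_into UNIV g x" y] bij_g
  by (metis bij_inv_eq_iff surj_f_inv_f bij_is_surj)

lemma gpow_gamma: "gpow g (- k) (\<gamma> x y) = \<gamma> (gpow g k x) y"
proof (induction k arbitrary: x rule: int_induct[where k = 0])
  case (step1 i)
  have "gpow g (- (i + 1)) (\<gamma> x y) = inv_into UNIV g (gpow g (- i) (\<gamma> x y))"
    using gpow_diff_one[OF bij_g, of "- i"] by simp
  then show ?case
    using step1 inv_gamma gpow_add_one[OF bij_g] by simp
next
  case (step2 i)
  have "gpow g (- (i - 1)) (\<gamma> x y) = g (gpow g (- i) (\<gamma> x y))"
    using gpow_add_one[OF bij_g, of "- i"] by simp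
  then show ?case
    using step2 gamma_inv_left gpow_diff_one[OF bij_g] by simp
qed simp

lemma Rad_sum_funpow_diff:
  assumes "\<forall>x. (\<Sum>k<m. (g ^^ k) x) \<in> Rad \<gamma>" "\<forall>x. (\<Sum>k<m'. (g ^^ k) x) \<in> Rad \<gamma>" "m' \<le> m"
  shows "(\<Sum>k<m - m'. (g ^^ k) x) \<in> Rad \<gamma>"
proof -
  obtain x0 where x: "x = (g ^^ m') x0"
    using bij_is_surj[OF bij_fn[OF bij_g, of m']] by (metis surj_def)
  have "(\<Sum>k<m. (g ^^ k) x0) = (\<Sum>k<m'. (g ^^ k) x0) + (\<Sum>k<m - m'. (g ^^ k) x)"
    using sum_funpow_add[of g x0 m' "m - m'"] x \<open>m' \<le> m\<close> by simp
  then have "(\<Sum>k<m - m'. (g ^^ k) x) = (\<Sum>k<m. (g ^^ k) x0) - (\<Sum>k<m'. (g ^^ k) x0)"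
    by (simp add: algebra_simps)
  then show ?thesis
    using assms(1,2) by (simp add: Rad_diff)
qed

lemma r_cp_dvd_iff:
  assumes "0 < n"
  shows "r_cp g \<gamma> dvd n \<longleftrightarrow> (\<forall>x. (\<Sum>k<n. (g ^^ k) x) \<in> Rad \<gamma>)"
  unfolding r_cp_def
  by (rule dvd_Least_iff_closed_add_diff[OF _ _ assms])
    (simp_all add: sum_funpow_add Rad_add Rad_sum_funpow_diff)

lemma mult_snd_eq:
  "mult_snd g \<gamma> i j x y = gpow g (- j) x + y + (\<Sum>k\<in>Ival (i + j) (- j). \<gamma> (gpow g k x) y)"
  by (simp add: mult_snd_def gpow_gamma)

lemma sum_gamma_gpow_interval:
  "(\<Sum>k\<in>{a..<a + int n}. \<gamma> (gpow g k x) y) = \<gamma> (\<Sum>k<n. (g ^^ k) (gpow g a x)) y"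
proof (induction n)
  case (Suc n)
  have "{a..<a + int (Suc n)} = insert (a + int n) {a..<a + int n}"
    by auto
  moreover have "gpow g (a + int n) x = (g ^^ n) (gpow g a x)"
    using gpow_add[OF bij_g, of "int n" a x] by (simp add: add.commute)
  ultimately show ?case
    using Suc by (simp add: gamma_add_left add.commute)
qed simp

lemma mult_snd_mod_invariant_if:
  assumes g_n: "g ^^ n = id" and Rad_n: "\<forall>x. (\<Sum>k<n. (g ^^ k) x) \<in> Rad \<gamma>"
    and "int n dvd i' - i" "int n dvd j' - j"
  shows "mult_snd g \<gamma> i j x y = mult_snd g \<gamma> i' j' x y"
proof -
  define F where "F c = (\<Sum>k\<in>Ival 0 c. \<gamma> (gpow g k x) y)" for c
  have Ival_sum: "(\<Sum>k\<in>Ival a b. \<gamma> (gpow g k x) y) = F a + F b" for a b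
    unfolding F_def by (rule sum_Ival_two_torsion) (rule gamma_two_torsion)
  have F_periodic: "F (a + int n) = F a" for a
  proof -
    have "F a + F (a + int n) = (\<Sum>k\<in>{a..<a + int n}. \<gamma> (gpow g k x) y)"
      by (simp add: Ival_def flip: Ival_sum)
    also have "\<dots> = 0"
      using Rad_n by (simp add: sum_gamma_gpow_interval Rad_def)
    finally show ?thesis
      using Ival_sum[of a a] by (metis Ival_self add_left_cancel sum.empty)
  qed
  have "gpow g (- j') x = gpow g (- j) x"
    using periodic_eq_if_dvd[of "\<lambda>k. gpow g k x" "int n" "- j'" "- j"] gpow_add_period[OF bij_g g_n]
      assms(4) by (simp add: dvd_diff_commute)
  moreover have "F (- j') = F (- j)"
    using periodic_eq_if_dvd[of F "int n" "- j'" "- j"] F_periodic assms(4)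
    by (simp add: dvd_diff_commute)
  moreover have "F (i' + j') = F (i + j)"
    using periodic_eq_if_dvd[of F "int n" "i' + j'" "i + j"] F_periodic dvd_add[OF assms(3,4)]
    by (simp add: algebra_simps)
  ultimately show ?thesis
    by (simp add: mult_snd_eq Ival_sum)
qed

lemma mult_snd_mod_invariant_iff:
  "(\<forall>i j i' j' x y. int n dvd i' - i \<and> int n dvd j' - j \<longrightarrow>
      mult_snd g \<gamma> i j x y = mult_snd g \<gamma> i' j' x y)
   \<longleftrightarrow> g ^^ n = id \<and> (\<forall>x. (\<Sum>k<n. (g ^^ k) x) \<in> Rad \<gamma>)"
proof (intro iffI conjI allI)
  assume invariant: "\<forall>i j i' j' x y. int n dvd i' - i \<and> int n dvd j' - j \<longrightarrow>
      mult_snd g \<gamma> i j x y = mult_snd g \<gamma> i' j' x y"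
  show "g ^^ n = id"
  proof
    fix x
    have "mult_snd g \<gamma> 0 (int n) x 0 = mult_snd g \<gamma> 0 0 x 0"
      using invariant by simp
    then have "gpow g (- int n) x = x"
      by (simp add: mult_snd_eq)
    then show "(g ^^ n) x = id x"
      using gpow_add[OF bij_g, of "int n" "- int n" x] by simp
  qed
  fix x
  have "\<gamma> (\<Sum>k<n. (g ^^ k) x) y = 0" for y
  proof -
    have "mult_snd g \<gamma> (int n) 0 x y = mult_snd g \<gamma> 0 0 x y"
      using invariant by simp
    moreover have "Ival (int n) 0 = {0..<int n}"
      by (auto simp: Ival_def)
    ultimately show ?thesis
      using sum_gamma_gpow_interval[of x y 0 n] by (simp add: mult_snd_eq)
  qed
  then show "(\<Sum>k<n. (g ^^ k) x) \<in> Rad \<gamma>"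
    by (simp add: Rad_def)
qed (auto intro: mult_snd_mod_invariant_if)

end

theorem mainTheorem1:
  fixes g :: "'a::ab_group_add \<Rightarrow> 'a" and \<gamma> :: "'a \<Rightarrow> 'a \<Rightarrow> 'a"
    and C :: "('c, 'd) monoid_scheme" and b :: 'c
  assumes cp: "construction_pair g \<gamma>"
    and grp: "group C"
    and b: "b \<in> carrier C"
    and cyc: "carrier C = {b [^]\<^bsub>C\<^esub> (i::int) | i. True}"
  shows "((\<forall>i j i' j' x y.
              b [^]\<^bsub>C\<^esub> i = b [^]\<^bsub>C\<^esub> i' \<and> b [^]\<^bsub>C\<^esub> j = b [^]\<^bsub>C\<^esub> j' \<longrightarrow>
              (b [^]\<^bsub>C\<^esub> (i + j), mult_snd g \<gamma> i j x y)
                = (b [^]\<^bsub>C\<^esub> (i' + j'), mult_snd g \<gamma> i' j' x y))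
          \<longleftrightarrow> (infinite (carrier C) \<or>
               (finite (carrier C) \<and> perm_ord g dvd card (carrier C) \<and>
                (\<forall>x. (\<Sum>k<card (carrier C). (g ^^ k) x) \<in> Rad \<gamma>))))
       \<and> ((infinite (carrier C) \<or>
               (finite (carrier C) \<and> perm_ord g dvd card (carrier C) \<and>
                (\<forall>x. (\<Sum>k<card (carrier C). (g ^^ k) x) \<in> Rad \<gamma>)))
          \<longleftrightarrow> (infinite (carrier C) \<or>
               (finite (carrier C) \<and> perm_ord g dvd card (carrier C) \<and> r_cp g \<gamma> dvd card (carrier C))))"
proof -
  interpret equivariant_form g \<gamma>
    using cp by (rule construction_pair_equivariant_form)
  define n where "n = card (carrier C)"
  have "group.ord C b = n"
    using group.generate_pow_card[OF grp b] group.generate_pow[OF grp b] cyc by (simp add: n_def)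
  then have pow_eq: "b [^]\<^bsub>C\<^esub> i = b [^]\<^bsub>C\<^esub> i' \<longleftrightarrow> int n dvd i' - i" for i i' :: int
    using group.int_pow_eq[OF grp b] by simp
  have sum_dvd: "int n dvd i' - i \<Longrightarrow> int n dvd j' - j \<Longrightarrow> int n dvd (i' + j') - (i + j)"
    for i j i' j' :: int
    using dvd_add by (fastforce simp: algebra_simps)
  have "finite (carrier C) \<Longrightarrow> 0 < n"
    using b by (auto simp: n_def card_gt_0_iff)
  moreover have "infinite (carrier C) \<Longrightarrow> n = 0"
    by (simp add: n_def)
  ultimately show ?thesis
    using mult_snd_mod_invariant_iff[of n] perm_ord_dvd_iff[of n g] r_cp_dvd_iff[of n]
    unfolding n_def[symmetric] by (auto simp: pow_eq dest: sum_dvd)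
qed

end
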